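(* Let $Z\subset\mathbb{R}^5$ be the set of real solutions $(x_1,\dots,x_5)$ of the system $$1+x_1=x_3x_4,\quad 1+x_2=x_4x_5,\quad 1+x_3=x_5x_1,\quad 1+x_4=x_1x_2,\quad 1+x_5=x_2x_3.$$ Then $Z$ is a smooth surface in $\mathbb{R}^5$. Its closure $S\subset\mathbb{R}\mathbb{P}^5$ (where $\mathbb{R}^5$ is regarded as a standard affine chart of $\mathbb{R}\mathbb{P}^5$) is a smooth compact surface, and its complexification $S_{\mathbb{C}}\subset\mathbb{C}\mathbb{P}^5$ is a smooth compact complex surface.
   Context: The complexification $S_{\mathbb{C}}$ means the closure in $\mathbb{C}\mathbb{P}^5$ of the set of complex solutions $(x_1,\dots,x_5)\in\mathbb{C}^5$ of the same system, with $\mathbb{C}^5$ regarded as the standard affine chart of $\mathbb{C}\mathbb{P}^5$. *)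

theory Defs
  imports "HOL-Analysis.Analysis"
begin

definition sys :: "'a::comm_ring_1 \<Rightarrow> 'a \<Rightarrow> 'a \<Rightarrow> 'a \<Rightarrow> 'a \<Rightarrow> bool" where
  "sys x1 x2 x3 x4 x5 \<longleftrightarrow>
     1 + x1 = x3 * x4 \<and> 1 + x2 = x4 * x5 \<and> 1 + x3 = x5 * x1 \<and>
     1 + x4 = x1 * x2 \<and> 1 + x5 = x2 * x3"

text \<open>Coordinates of a point of K^5 are x$1,...,x$5 (indices in the numeral type 5;
  note that 5 = 0 there, the five indices are distinct).\<close>

definition solset :: "('a::comm_ring_1, 5) vec set" where
  "solset = {x. sys (x$1) (x$2) (x$3) (x$4) (x$5)}"

section \<open>Homogeneous coordinates: K^6 indexed by 5 option, None = extra coordinate\<close>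

definition hom :: "('a::comm_ring_1, 'n::finite) vec \<Rightarrow> ('a, 'n option) vec" where
  "hom x = (\<chi> j. case j of None \<Rightarrow> 1 | Some i \<Rightarrow> x $ i)"

text \<open>Affine chart {y. y$k \<noteq> 0} of projective space, identified with K^n
  (coordinates y$j/y$k for j \<noteq> k, in a fixed order).\<close>

definition chart :: "'n::finite option \<Rightarrow> ('a::field, 'n option) vec \<Rightarrow> ('a, 'n) vec" where
  "chart k y = (case k of
      None \<Rightarrow> (\<chi> i. y $ Some i / y $ None)
    | Some j \<Rightarrow> (\<chi> i. if i = j then y $ None / y $ Some j else y $ Some i / y $ Some j))"

text \<open>Preimage in K^(n+1) - {0} of the closure in projective space of an affine set A
  (the quotient map K^(n+1)-{0} \<rightarrow> KP^n is open, so this is closure of the cone minus 0).\<close>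

definition proj_closure_cone ::
  "('a::{field, real_normed_vector}, 'n::finite) vec set \<Rightarrow> ('a, 'n option) vec set" where
  "proj_closure_cone A = closure {c *s hom x | c x. c \<noteq> 0 \<and> x \<in> A} - {0}"

fun iter_dd :: "'a::real_normed_vector list \<Rightarrow> ('a \<Rightarrow> 'b::real_normed_vector) \<Rightarrow> 'a \<Rightarrow> 'b" where
  "iter_dd [] f = f"
| "iter_dd (v # vs) f = (\<lambda>x. frechet_derivative (iter_dd vs f) (at x) v)"

definition smooth_on :: "'a::real_normed_vector set \<Rightarrow> ('a \<Rightarrow> 'b::real_normed_vector) \<Rightarrow> bool" where
  "smooth_on U f \<longleftrightarrow> (\<forall>vs. \<forall>x\<in>U. iter_dd vs f differentiable (at x))"

text \<open>M is a smooth embedded submanifold of R^n of codimension CARD('m):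
  locally the zero set of a smooth submersion to R^'m.\<close>

definition real_submanifold :: "'m::finite itself \<Rightarrow> (real, 'n::finite) vec set \<Rightarrow> bool" where
  "real_submanifold _ M \<longleftrightarrow>
    (\<forall>p\<in>M. \<exists>U (F :: (real, 'n) vec \<Rightarrow> (real, 'm) vec).
       open U \<and> p \<in> U \<and> smooth_on U F \<and>
       (\<forall>x\<in>U. surj (frechet_derivative F (at x))) \<and>
       M \<inter> U = {x\<in>U. F x = 0})"

definition complex_submanifold :: "'m::finite itself \<Rightarrow> (complex, 'n::finite) vec set \<Rightarrow> bool" where
  "complex_submanifold _ M \<longleftrightarrow>
    (\<forall>p\<in>M. \<exists>U (F :: (complex, 'n) vec \<Rightarrow> (complex, 'm) vec).
       open U \<and> p \<in> U \<and>
       (\<forall>x\<in>U. \<exists>L. (F has_derivative L) (at x) \<and> (\<forall>c v. L (c *s v) = c *s L v) \<and> surj L) \<and>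
       M \<inter> U = {x\<in>U. F x = 0})"

end

theory Submission
  imports Defs
begin

text \<open>
  Every solution has two nonzero coordinates x$a, x$(a + 2): the equation
  1 + x$a = x$(a + 2) * x$(a + 3) forbids both to vanish, and they cannot alternate around the
  odd cycle 0, 2, 4, 1, 3. Where x$(a + 2) \<noteq> 0, the three equations at a, a + 2, a + 4 imply the
  other two, and their Jacobian is triangular with diagonal x$a, x$(a + 2), x$(a + 2); so the
  solution set is locally cut out by a polynomial submersion to K^3.

  In homogeneous coordinates the projective closure lies in the zero set of the homogenized
  system. In the chart y$(Some a) = 1 that zero set is the graph
  z$(a + 4) = z$a^2 + z$a z$(a + 2), z$(a + 1) = z$a^2 + z$a z$(a + 3) over the smooth quadric
  z$(a + 2) z$(a + 3) = z$a^2 + z$a, and each of its points is a limit of points with z$a \<noteq> 0,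
  which lie on the cone over the affine solutions. Hence every chart of the closure is a smooth
  surface, over R and over C alike, and the closure meets the unit sphere in a compact set.
\<close>

lemma exhaust_5:
  fixes x :: 5
  shows "x = 0 \<or> x = 1 \<or> x = 2 \<or> x = 3 \<or> x = 4"
proof (induct x)
  case (of_int z)
  then have "z = 0 \<or> z = 1 \<or> z = 2 \<or> z = 3 \<or> z = 4" by fastforce
  then show ?case by auto
qed

lemma exhaust_5_from:
  fixes i a :: 5
  shows "i = a \<or> i = a + 1 \<or> i = a + 2 \<or> i = a + 3 \<or> i = a + 4"
  using exhaust_5[of "i - a"] by (auto simp: algebra_simps)

lemma forall_5_from: "(\<forall>i::5. P i) \<longleftrightarrow> P a \<and> P (a + 1) \<and> P (a + 2) \<and> P (a + 3) \<and> P (a + 4)"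
  by (metis exhaust_5_from)

lemma numeral_5_wrap [simp]: "(5::5) = 0" "(6::5) = 1" "(7::5) = 2"
  by simp_all

lemma solset_iff_cyclic: "x \<in> solset \<longleftrightarrow> (\<forall>i::5. 1 + x$i = x$(i + 2) * x$(i + 3))"
  unfolding solset_def sys_def forall_5_from[where a=0] by (auto simp: algebra_simps)

lemma solset_iff_from:
  "x \<in> solset \<longleftrightarrow>
     1 + x$a = x$(a + 2) * x$(a + 3) \<and> 1 + x$(a + 1) = x$(a + 3) * x$(a + 4) \<and>
     1 + x$(a + 2) = x$(a + 4) * x$a \<and> 1 + x$(a + 3) = x$a * x$(a + 1) \<and>
     1 + x$(a + 4) = x$(a + 1) * x$(a + 2)"
  unfolding solset_iff_cyclic forall_5_from[where a=a] by (simp add: add.assoc)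

lemma solset_subset_nonzero_pairs:
  "(solset :: ('a::comm_ring_1, 5) vec set) \<subseteq> (\<Union>a. {x. x$a \<noteq> 0 \<and> x$(a + 2) \<noteq> 0})"
proof
  fix x :: "('a, 5) vec" assume "x \<in> solset"
  then have not_both: "x$a \<noteq> 0 \<or> x$(a + 2) \<noteq> 0" for a
    unfolding solset_iff_cyclic by (metis add.right_neutral mult_zero_left zero_neq_one)
  have "\<exists>a. x$a \<noteq> 0 \<and> x$(a + 2) \<noteq> 0"
  proof (rule ccontr)
    assume "\<nexists>a. x$a \<noteq> 0 \<and> x$(a + 2) \<noteq> 0"
    then have one_zero: "x$a = 0 \<or> x$(a + 2) = 0" for a
      by blast
    from one_zero[of 0] one_zero[of 2] one_zero[of 4] one_zero[of 1] one_zero[of 3]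
      not_both[of 0] not_both[of 2] not_both[of 4] not_both[of 1] not_both[of 3]
    show False
      by simp blast
  qed
  then show "x \<in> (\<Union>a. {x. x$a \<noteq> 0 \<and> x$(a + 2) \<noteq> 0})"
    by blast
qed

lemma solset_iff_three_equations:
  fixes x :: "('a::field, 5) vec"
  assumes "x$(a + 2) \<noteq> 0"
  shows "x \<in> solset \<longleftrightarrow>
    1 + x$a = x$(a + 2) * x$(a + 3) \<and> 1 + x$(a + 2) = x$(a + 4) * x$a \<and>
    1 + x$(a + 4) = x$(a + 1) * x$(a + 2)"
proof (intro iffI)
  assume eqs: "1 + x$a = x$(a + 2) * x$(a + 3) \<and> 1 + x$(a + 2) = x$(a + 4) * x$a \<and>
    1 + x$(a + 4) = x$(a + 1) * x$(a + 2)"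
  then have "x$(a + 2) * (1 + x$(a + 1)) = x$(a + 2) * (x$(a + 3) * x$(a + 4))"
    "x$(a + 2) * (1 + x$(a + 3)) = x$(a + 2) * (x$a * x$(a + 1))"
    by algebra+
  then show "x \<in> solset"
    using assms eqs unfolding solset_iff_from[where a=a] by simp
qed (simp add: solset_iff_from[where a=a])

section \<open>Derivatives of vector-valued maps and smoothness of polynomial maps\<close>

lemma bounded_linear_vec_lambda:
  assumes "\<And>i. bounded_linear (f i)"
  shows "bounded_linear (\<lambda>h. (\<chi> i. f i h) :: ('b::real_normed_vector, 'n::finite) vec)"
proof -
  have "\<forall>i. \<exists>K. \<forall>x. norm (f i x) \<le> norm x * K"
    using assms bounded_linear.bounded by blast
  then obtain K where K: "\<And>i x. norm (f i x) \<le> norm x * K i"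
    by metis
  show ?thesis
  proof (rule bounded_linear_intro[where K="\<Sum>i\<in>UNIV. K i"])
    show "(\<chi> i. f i (x + y)) = (\<chi> i. f i x) + (\<chi> i. f i y)" for x y
      using assms by (simp add: vec_eq_iff linear_add[OF bounded_linear.linear])
    show "(\<chi> i. f i (r *\<^sub>R x)) = r *\<^sub>R (\<chi> i. f i x)" for r x
      using assms by (simp add: vec_eq_iff linear_scale[OF bounded_linear.linear])
    show "norm (\<chi> i. f i x) \<le> norm x * (\<Sum>i\<in>UNIV. K i)" for x
    proof -
      have "norm (\<chi> i. f i x) \<le> (\<Sum>i\<in>UNIV. norm (f i x))"
        unfolding norm_vec_def vec_lambda_beta by (rule L2_set_le_sum) simp
      also have "\<dots> \<le> (\<Sum>i\<in>UNIV. norm x * K i)"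
        by (rule sum_mono) (rule K)
      finally show ?thesis
        by (simp add: sum_distrib_left)
    qed
  qed
qed

lemma has_derivative_vec_lambda:
  assumes "\<And>i. (f i has_derivative f' i) F"
  shows "((\<lambda>x. (\<chi> i. f i x) :: ('b::real_normed_vector, 'n::finite) vec)
    has_derivative (\<lambda>h. \<chi> i. f' i h)) F"
proof -
  have diff_quotient: "(\<lambda>y. ((\<chi> i. f i y) - (\<chi> i. f i (netlimit F)) - (\<chi> i. f' i (y - netlimit F)))
      /\<^sub>R norm (y - netlimit F))
    = (\<lambda>y. \<chi> i. (f i y - f i (netlimit F) - f' i (y - netlimit F)) /\<^sub>R norm (y - netlimit F))"
    by (rule ext) (simp add: vec_eq_iff)
  have zero: "(0::('b, 'n) vec) = (\<chi> i. 0)"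
    by (simp add: vec_eq_iff)
  show ?thesis
    using assms unfolding has_derivative_def diff_quotient
    by (subst zero) (auto intro!: bounded_linear_vec_lambda tendsto_vec_lambda)
qed

lemma has_derivative_vector_3:
  assumes "(f has_derivative f') F" "(g has_derivative g') F" "(h has_derivative h') F"
  shows "((\<lambda>x. vector [f x, g x, h x] :: ('b::real_normed_vector, 3) vec)
    has_derivative (\<lambda>v. vector [f' v, g' v, h' v])) F"
proof -
  have "((\<lambda>x. \<chi> k. (vector [f x, g x, h x] :: ('b, 3) vec) $ k)
    has_derivative (\<lambda>v. \<chi> k. (vector [f' v, g' v, h' v] :: ('b, 3) vec) $ k)) F"
  proof (rule has_derivative_vec_lambda)
    fix k :: 3
    show "((\<lambda>x. (vector [f x, g x, h x] :: ('b, 3) vec) $ k)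
      has_derivative (\<lambda>v. (vector [f' v, g' v, h' v] :: ('b, 3) vec) $ k)) F"
      using exhaust_3[of k] assms by auto
  qed
  then show ?thesis
    by simp
qed

lemma has_derivative_vec_nth [derivative_intros]: "((\<lambda>x. x $ i) has_derivative (\<lambda>h. h $ i)) F"
  by (rule bounded_linear_imp_has_derivative) (rule bounded_linear_vec_nth)

lemma real_polynomial_function_has_derivative:
  assumes "real_polynomial_function f"
  shows "\<exists>D. (\<forall>x. (f has_derivative D x) (at x)) \<and> (\<forall>v. real_polynomial_function (\<lambda>x. D x v))"
  using assms
proof (induction rule: real_polynomial_function.induct)
  case (linear f)
  then show ?case
    by (intro exI[of _ "\<lambda>x. f"]) (auto intro: bounded_linear_imp_has_derivative)
next
  case (const c)
  then show ?case
    by (intro exI[of _ "\<lambda>x h. 0"]) auto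
next
  case (add f g)
  then obtain Df Dg
    where "\<forall>x. (f has_derivative Df x) (at x)" "\<forall>v. real_polynomial_function (\<lambda>x. Df x v)"
      and "\<forall>x. (g has_derivative Dg x) (at x)" "\<forall>v. real_polynomial_function (\<lambda>x. Dg x v)"
    by blast
  then show ?case
    by (intro exI[of _ "\<lambda>x h. Df x h + Dg x h"] conjI allI has_derivative_add
        real_polynomial_function.intros(3)) simp_all
next
  case (mult f g)
  then obtain Df Dg
    where "\<forall>x. (f has_derivative Df x) (at x)" "\<forall>v. real_polynomial_function (\<lambda>x. Df x v)"
      and "\<forall>x. (g has_derivative Dg x) (at x)" "\<forall>v. real_polynomial_function (\<lambda>x. Dg x v)"
    by blast
  with mult.hyps show ?case
    by (intro exI[of _ "\<lambda>x h. f x * Dg x h + Df x h * g x"] conjI allI has_derivative_mult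
        real_polynomial_function.intros(3,4)) simp_all
qed

lemma polynomial_function_frechet_derivative:
  fixes f :: "'a::real_normed_vector \<Rightarrow> 'b::euclidean_space"
  assumes f: "polynomial_function f"
  shows "polynomial_function (\<lambda>x. frechet_derivative f (at x) v)"
  unfolding polynomial_function_iff_Basis_inner
proof
  fix b :: 'b assume "b \<in> Basis"
  then have "real_polynomial_function (\<lambda>x. f x \<bullet> b)"
    using f polynomial_function_iff_Basis_inner by blast
  then obtain D where D: "\<And>x. ((\<lambda>x. f x \<bullet> b) has_derivative D x) (at x)"
    and D_poly: "real_polynomial_function (\<lambda>x. D x v)"
    using real_polynomial_function_has_derivative by blast
  have "frechet_derivative f (at x) v \<bullet> b = D x v" for x
  proof -
    have "(f has_derivative frechet_derivative f (at x)) (at x)"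
      using differentiable_at_polynomial_function[OF f] frechet_derivative_works by blast
    then have "((\<lambda>x. f x \<bullet> b) has_derivative (\<lambda>v. frechet_derivative f (at x) v \<bullet> b)) (at x)"
      by (rule has_derivative_inner_left)
    then show ?thesis
      using D has_derivative_unique by metis
  qed
  then show "real_polynomial_function (\<lambda>x. frechet_derivative f (at x) v \<bullet> b)"
    using D_poly by simp
qed

lemma smooth_on_polynomial_function:
  fixes f :: "'a::real_normed_vector \<Rightarrow> 'b::euclidean_space"
  assumes "polynomial_function f"
  shows "smooth_on U f"
proof -
  have "polynomial_function (iter_dd vs f)" for vs
    by (induction vs) (simp_all add: assms polynomial_function_frechet_derivative)
  then show ?thesis
    unfolding smooth_on_def by (blast intro: differentiable_at_polynomial_function)
qed

lemma polynomial_function_vector_3: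
  assumes "real_polynomial_function f" "real_polynomial_function g" "real_polynomial_function h"
  shows "polynomial_function (\<lambda>x. vector [f x, g x, h x] :: (real, 3) vec)"
proof -
  have "(vector [f x, g x, h x] :: (real, 3) vec) = f x *\<^sub>R axis 1 1 + g x *\<^sub>R axis 2 1 + h x *\<^sub>R axis 3 1" for x
    by (simp add: vec_eq_iff forall_3 axis_def)
  then show ?thesis
    using assms by (simp add: real_polynomial_function_eq polynomial_function_add polynomial_function_mult)
qed

definition local_equations ::
  "('a::real_normed_field, 'n::finite) vec set \<Rightarrow> (('a, 'n) vec \<Rightarrow> ('a, 'm::finite) vec) \<Rightarrow>
    (('a, 'n) vec \<Rightarrow> ('a, 'n) vec \<Rightarrow> ('a, 'm) vec) \<Rightarrow> ('a, 'n) vec set \<Rightarrow> bool" where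
  "local_equations U F F' M \<longleftrightarrow> open U \<and> M \<inter> U = {x \<in> U. F x = 0} \<and>
     (\<forall>x\<in>U. (F has_derivative F' x) (at x) \<and> (\<forall>c v. F' x (c *s v) = c *s F' x v) \<and> surj (F' x))"

lemma real_submanifoldI:
  fixes M :: "(real, 'n::finite) vec set" and F :: "'i \<Rightarrow> (real, 'n) vec \<Rightarrow> (real, 'm::finite) vec"
  assumes cover: "M \<subseteq> (\<Union>i. U i)"
    and eqs: "\<And>i. local_equations (U i) (F i) (F' i) M" and poly: "\<And>i. polynomial_function (F i)"
  shows "real_submanifold TYPE('m) M"
  unfolding real_submanifold_def
proof
  fix p assume "p \<in> M"
  then obtain i where p: "p \<in> U i"
    using cover by blast
  have "frechet_derivative (F i) (at x) = F' i x" if "x \<in> U i" for x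
  proof -
    have "(F i has_derivative F' i x) (at x)"
      using eqs[of i] that unfolding local_equations_def by blast
    then show ?thesis
      by (rule frechet_derivative_at[symmetric])
  qed
  then have "open (U i) \<and> p \<in> U i \<and> smooth_on (U i) (F i) \<and>
      (\<forall>x\<in>U i. surj (frechet_derivative (F i) (at x))) \<and> M \<inter> U i = {x\<in>U i. F i x = 0}"
    using p eqs[of i] smooth_on_polynomial_function[OF poly] unfolding local_equations_def by simp
  then show "\<exists>U (F :: (real, 'n) vec \<Rightarrow> (real, 'm) vec). open U \<and> p \<in> U \<and> smooth_on U F \<and>
      (\<forall>x\<in>U. surj (frechet_derivative F (at x))) \<and> M \<inter> U = {x\<in>U. F x = 0}"
    by blast
qed

lemma complex_submanifoldI:
  fixes M :: "(complex, 'n::finite) vec set" and F :: "'i \<Rightarrow> (complex, 'n) vec \<Rightarrow> (complex, 'm::finite) vec"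
  assumes cover: "M \<subseteq> (\<Union>i. U i)" and eqs: "\<And>i. local_equations (U i) (F i) (F' i) M"
  shows "complex_submanifold TYPE('m) M"
  unfolding complex_submanifold_def
proof
  fix p assume "p \<in> M"
  then obtain i where p: "p \<in> U i"
    using cover by blast
  show "\<exists>U (F :: (complex, 'n) vec \<Rightarrow> (complex, 'm) vec). open U \<and> p \<in> U \<and>
      (\<forall>x\<in>U. \<exists>L. (F has_derivative L) (at x) \<and> (\<forall>c v. L (c *s v) = c *s L v) \<and> surj L) \<and>
      M \<inter> U = {x\<in>U. F x = 0}"
  proof (rule exI[of _ "U i"], rule exI[of _ "F i"], intro conjI ballI)
    fix x assume "x \<in> U i"
    then show "\<exists>L. (F i has_derivative L) (at x) \<and> (\<forall>c v. L (c *s v) = c *s L v) \<and> surj L"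
      using eqs[of i] unfolding local_equations_def by (intro exI[of _ "F' i x"]) simp
  qed (use p eqs[of i] in \<open>simp_all add: local_equations_def\<close>)
qed

definition cyclic_vec :: "5 \<Rightarrow> 'a \<Rightarrow> 'a \<Rightarrow> 'a \<Rightarrow> 'a \<Rightarrow> 'a \<Rightarrow> ('a, 5) vec" where
  "cyclic_vec a u0 u1 u2 u3 u4 = (\<chi> i. if i = a then u0 else if i = a + 1 then u1
     else if i = a + 2 then u2 else if i = a + 3 then u3 else u4)"

lemma cyclic_vec_nth [simp]:
  "cyclic_vec a u0 u1 u2 u3 u4 $ a = u0" "cyclic_vec a u0 u1 u2 u3 u4 $ (a + 1) = u1"
  "cyclic_vec a u0 u1 u2 u3 u4 $ (a + 2) = u2" "cyclic_vec a u0 u1 u2 u3 u4 $ (a + 3) = u3"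
  "cyclic_vec a u0 u1 u2 u3 u4 $ (a + 4) = u4"
  by (simp_all add: cyclic_vec_def)

lemma cyclic_vec_eq_iff:
  "cyclic_vec a u0 u1 u2 u3 u4 = x \<longleftrightarrow>
    x$a = u0 \<and> x$(a + 1) = u1 \<and> x$(a + 2) = u2 \<and> x$(a + 3) = u3 \<and> x$(a + 4) = u4"
  unfolding vec_eq_iff forall_5_from[where a=a] by auto

lemma continuous_cyclic_vec [continuous_intros]:
  assumes "continuous F f0" "continuous F f1" "continuous F f2" "continuous F f3" "continuous F f4"
  shows "continuous F (\<lambda>t. cyclic_vec a (f0 t) (f1 t) (f2 t) (f3 t) (f4 t))"
  using assms unfolding continuous_def cyclic_vec_def by (auto intro!: tendsto_vec_lambda)

definition affine_equations :: "5 \<Rightarrow> ('a::real_normed_field, 5) vec \<Rightarrow> ('a, 3) vec" where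
  "affine_equations a x = vector [1 + x$a - x$(a + 2) * x$(a + 3),
     1 + x$(a + 2) - x$(a + 4) * x$a, 1 + x$(a + 4) - x$(a + 1) * x$(a + 2)]"

definition affine_equations_deriv :: "5 \<Rightarrow> ('a::real_normed_field, 5) vec \<Rightarrow> ('a, 5) vec \<Rightarrow> ('a, 3) vec" where
  "affine_equations_deriv a x h = vector [h$a - (x$(a + 2) * h$(a + 3) + h$(a + 2) * x$(a + 3)),
     h$(a + 2) - (x$(a + 4) * h$a + h$(a + 4) * x$a),
     h$(a + 4) - (x$(a + 1) * h$(a + 2) + h$(a + 1) * x$(a + 2))]"

lemma polynomial_function_affine_equations:
  "polynomial_function (affine_equations a :: (real, 5) vec \<Rightarrow> (real, 3) vec)"
  unfolding affine_equations_def
  by (intro polynomial_function_vector_3 real_polynomial_function_diff real_polynomial_function.intros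
      bounded_linear_vec_nth)

lemma local_equations_solset:
  "local_equations {x. x$a \<noteq> 0 \<and> x$(a + 2) \<noteq> 0} (affine_equations a) (affine_equations_deriv a)
    (solset :: ('a::real_normed_field, 5) vec set)"
  unfolding local_equations_def
proof (intro conjI ballI allI)
  show "open {x::('a, 5) vec. x$a \<noteq> 0 \<and> x$(a + 2) \<noteq> 0}"
    by (intro open_Collect_conj open_Collect_neq continuous_intros)
  show "solset \<inter> {x. x$a \<noteq> 0 \<and> x$(a + 2) \<noteq> 0} =
    {x \<in> {x. x$a \<noteq> 0 \<and> x$(a + 2) \<noteq> 0}. affine_equations a x = 0}"
    by (auto simp: solset_iff_three_equations affine_equations_def vec_eq_iff forall_3)
  fix x :: "('a, 5) vec"
  show "(affine_equations a has_derivative affine_equations_deriv a x) (at x)"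
    unfolding affine_equations_def[abs_def] affine_equations_deriv_def
    by (intro has_derivative_vector_3 derivative_eq_intros) auto
  show "affine_equations_deriv a x (c *s v) = c *s affine_equations_deriv a x v" for c v
    by (simp add: affine_equations_deriv_def vec_eq_iff forall_3 algebra_simps)
  assume "x \<in> {x. x$a \<noteq> 0 \<and> x$(a + 2) \<noteq> 0}"
  then have "affine_equations_deriv a x
      (cyclic_vec a 0 ((- b$2 / x$a - b$3) / x$(a + 2)) 0 (- b$1 / x$(a + 2)) (- b$2 / x$a)) = b" for b
    by (simp add: affine_equations_deriv_def vec_eq_iff forall_3)
  then show "surj (affine_equations_deriv a x)"
    unfolding surj_def by metis
qed

lemma real_submanifold_solset: "real_submanifold TYPE(3) (solset :: (real, 5) vec set)"
  by (rule real_submanifoldI[OF solset_subset_nonzero_pairs local_equations_solset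
        polynomial_function_affine_equations])

lemma complex_submanifold_solset: "complex_submanifold TYPE(3) (solset :: (complex, 5) vec set)"
  by (rule complex_submanifoldI[OF solset_subset_nonzero_pairs local_equations_solset])

section \<open>The surface in the charts at infinity\<close>

text \<open>
  The homogenized system in the chart y$(Some a) = 1, with z$a in the role of the homogenizing
  coordinate y$None.
\<close>

definition chart_equations :: "5 \<Rightarrow> ('a::real_normed_field, 5) vec \<Rightarrow> ('a, 3) vec" where
  "chart_equations a z = vector [z$(a + 4) - (z$a * z$a + z$a * z$(a + 2)),
     z$(a + 1) - (z$a * z$a + z$a * z$(a + 3)), z$(a + 2) * z$(a + 3) - (z$a * z$a + z$a)]"

definition chart_equations_deriv :: "5 \<Rightarrow> ('a::real_normed_field, 5) vec \<Rightarrow> ('a, 5) vec \<Rightarrow> ('a, 3) vec" where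
  "chart_equations_deriv a z h = vector
     [h$(a + 4) - (z$a * h$a + h$a * z$a + (z$a * h$(a + 2) + h$a * z$(a + 2))),
      h$(a + 1) - (z$a * h$a + h$a * z$a + (z$a * h$(a + 3) + h$a * z$(a + 3))),
      z$(a + 2) * h$(a + 3) + h$(a + 2) * z$(a + 3) - (z$a * h$a + h$a * z$a + h$a)]"

definition chart_surface :: "5 \<Rightarrow> ('a::real_normed_field, 5) vec set" where
  "chart_surface a = {z. chart_equations a z = 0}"

lemma mem_chart_surface_iff:
  "z \<in> chart_surface a \<longleftrightarrow> z$(a + 4) = z$a * z$a + z$a * z$(a + 2) \<and>
    z$(a + 1) = z$a * z$a + z$a * z$(a + 3) \<and> z$(a + 2) * z$(a + 3) = z$a * z$a + z$a"
  by (simp add: chart_surface_def chart_equations_def vec_eq_iff forall_3)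

definition chart_regular_set :: "5 \<Rightarrow> ('a::real_normed_field, 5) vec set" where
  "chart_regular_set a = {z. z$(a + 2) \<noteq> 0 \<or> z$(a + 3) \<noteq> 0 \<or> 2 * z$a + 1 \<noteq> 0}"

lemma chart_surface_subset_regular_set: "chart_surface a \<subseteq> chart_regular_set a"
proof
  fix z :: "('a, 5) vec" assume z: "z \<in> chart_surface a"
  show "z \<in> chart_regular_set a"
  proof (rule ccontr)
    assume "z \<notin> chart_regular_set a"
    then have "z$(a + 2) = 0" "z$(a + 3) = 0" "2 * z$a + 1 = 0"
      by (auto simp: chart_regular_set_def)
    moreover have "(2 * z$a + 1) * (2 * z$a + 1) = 4 * (z$(a + 2) * z$(a + 3)) + 1"
      using z by (simp add: mem_chart_surface_iff algebra_simps)
    ultimately show False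
      by simp
  qed
qed

lemma polynomial_function_chart_equations:
  "polynomial_function (chart_equations a :: (real, 5) vec \<Rightarrow> (real, 3) vec)"
  unfolding chart_equations_def
  by (intro polynomial_function_vector_3 real_polynomial_function_diff real_polynomial_function.intros
      bounded_linear_vec_nth)

text \<open>
  The first two components of chart_equations_deriv are solved for h$(a + 4) and h$(a + 1); the third is the derivative
  of the quadric z$(a + 2) z$(a + 3) = z$a^2 + z$a, whose gradient vanishes nowhere on
  chart_regular_set.
\<close>

lemma quadric_deriv_surj:
  assumes "z \<in> chart_regular_set a"
  shows "\<exists>h0 h2 h3. z$(a + 2) * h3 + h2 * z$(a + 3) - (z$a * h0 + h0 * z$a + h0) = t"
  using assms unfolding chart_regular_set_def
proof (elim CollectE disjE)
  assume "z$(a + 2) \<noteq> 0"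
  then have "z$(a + 2) * (t / z$(a + 2)) + 0 * z$(a + 3) - (z$a * 0 + 0 * z$a + 0) = t"
    by simp
  then show ?thesis
    by blast
next
  assume "z$(a + 3) \<noteq> 0"
  then have "z$(a + 2) * 0 + t / z$(a + 3) * z$(a + 3) - (z$a * 0 + 0 * z$a + 0) = t"
    by simp
  then show ?thesis
    by blast
next
  assume nz: "2 * z$a + 1 \<noteq> 0"
  define h where "h = - t / (2 * z$a + 1)"
  have "z$a * h + h * z$a + h = (2 * z$a + 1) * h"
    by (simp add: algebra_simps)
  also have "\<dots> = - t"
    using nz by (simp add: h_def)
  finally have "z$(a + 2) * 0 + 0 * z$(a + 3) - (z$a * h + h * z$a + h) = t"
    by simp
  then show ?thesis
    by blast
qed

lemma surj_chart_equations_deriv: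
  assumes "z \<in> chart_regular_set a"
  shows "surj (chart_equations_deriv a z :: ('a::real_normed_field, 5) vec \<Rightarrow> _)"
proof -
  have "\<exists>h. chart_equations_deriv a z h = b" for b
  proof -
    obtain h0 h2 h3 where h: "z$(a + 2) * h3 + h2 * z$(a + 3) - (z$a * h0 + h0 * z$a + h0) = b$3"
      using quadric_deriv_surj[OF assms] by blast
    show ?thesis
      by (rule exI[of _ "cyclic_vec a h0
          (b$2 + (z$a * h0 + h0 * z$a + (z$a * h3 + h0 * z$(a + 3)))) h2 h3
          (b$1 + (z$a * h0 + h0 * z$a + (z$a * h2 + h0 * z$(a + 2))))"])
        (use h in \<open>simp add: chart_equations_deriv_def vec_eq_iff forall_3\<close>)
  qed
  then show ?thesis
    unfolding surj_def by metis
qed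

lemma local_equations_chart_surface:
  "local_equations (chart_regular_set a) (chart_equations a) (chart_equations_deriv a)
    (chart_surface a :: ('a::real_normed_field, 5) vec set)"
  unfolding local_equations_def
proof (intro conjI ballI allI)
  have "chart_regular_set a = {z::('a, 5) vec. z$(a + 2) \<noteq> 0} \<union> {z. z$(a + 3) \<noteq> 0} \<union> {z. 2 * z$a + 1 \<noteq> 0}"
    by (auto simp: chart_regular_set_def)
  then show "open (chart_regular_set a :: ('a, 5) vec set)"
    by (simp only:) (intro open_Un open_Collect_neq continuous_intros)
  show "chart_surface a \<inter> chart_regular_set a = {z \<in> chart_regular_set a. chart_equations a z = 0}"
    using chart_surface_subset_regular_set by (auto simp: chart_surface_def)
  fix z :: "('a, 5) vec"
  show "(chart_equations a has_derivative chart_equations_deriv a z) (at z)"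
    unfolding chart_equations_def[abs_def] chart_equations_deriv_def
    by (intro has_derivative_vector_3 derivative_eq_intros) auto
  show "chart_equations_deriv a z (c *s v) = c *s chart_equations_deriv a z v" for c v
    by (simp add: chart_equations_deriv_def vec_eq_iff forall_3 algebra_simps)
  assume "z \<in> chart_regular_set a"
  then show "surj (chart_equations_deriv a z)"
    by (rule surj_chart_equations_deriv)
qed

lemma real_submanifold_chart_surface: "real_submanifold TYPE(3) (chart_surface a :: (real, 5) vec set)"
  by (rule real_submanifoldI[where U = "\<lambda>_::unit. chart_regular_set a" and F = "\<lambda>_. chart_equations a"
        and F' = "\<lambda>_. chart_equations_deriv a"])
    (use chart_surface_subset_regular_set local_equations_chart_surface
        polynomial_function_chart_equations in auto)

lemma complex_submanifold_chart_surface: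
  "complex_submanifold TYPE(3) (chart_surface a :: (complex, 5) vec set)"
  by (rule complex_submanifoldI[where U = "\<lambda>_::unit. chart_regular_set a" and F = "\<lambda>_. chart_equations a"
        and F' = "\<lambda>_. chart_equations_deriv a"])
    (use chart_surface_subset_regular_set local_equations_chart_surface in auto)

definition chart_inv :: "'n option \<Rightarrow> ('a::field, 'n::finite) vec \<Rightarrow> ('a, 'n option) vec" where
  "chart_inv k z = (case k of
      None \<Rightarrow> hom z
    | Some a \<Rightarrow> (\<chi> j. case j of None \<Rightarrow> z $ a | Some i \<Rightarrow> if i = a then 1 else z $ i))"

lemma chart_inv_None [simp]: "chart_inv None z = hom z"
  by (simp add: chart_inv_def)

lemma chart_inv_Some_nth [simp]:
  "chart_inv (Some a) z $ None = z $ a" "chart_inv (Some a) z $ Some i = (if i = a then 1 else z $ i)"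
  by (simp_all add: chart_inv_def)

lemma chart_chart_inv [simp]: "chart k (chart_inv k z) = z"
  by (cases k) (simp_all add: chart_def hom_def vec_eq_iff)

lemma chart_inv_nth_self [simp]: "chart_inv k z $ k = 1"
  by (cases k) (simp_all add: hom_def)

lemma scale_chart_inv_chart:
  assumes "y $ k \<noteq> 0"
  shows "y $ k *s chart_inv k (chart k y) = y"
  using assms by (cases k) (auto simp: chart_def chart_inv_def hom_def vec_eq_iff split: option.split)

lemma continuous_on_chart_inv:
  "continuous_on S (chart_inv k :: ('a::real_normed_field, 'n::finite) vec \<Rightarrow> _)"
proof -
  have "continuous_on S (\<lambda>z. chart_inv k z $ j)" for j
    by (cases k; cases j; cases "j = k")
      (simp_all add: chart_inv_def hom_def continuous_on_component)
  then show ?thesis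
    using continuous_on_vec_lambda[of S "\<lambda>j z. chart_inv k z $ j"] by simp
qed

definition scale_invariant :: "('a::field, 'n::finite) vec set \<Rightarrow> bool" where
  "scale_invariant C \<longleftrightarrow> (\<forall>c y. c \<noteq> 0 \<longrightarrow> y \<in> C \<longrightarrow> c *s y \<in> C)"

lemma scale_invariant_closure:
  fixes C :: "('a::real_normed_field, 'n::finite) vec set"
  assumes "scale_invariant C"
  shows "scale_invariant (closure C)"
  unfolding scale_invariant_def
proof (intro allI impI)
  fix c :: 'a and y assume "c \<noteq> 0" "y \<in> closure C"
  have "continuous_on (closure C) (\<lambda>y. c *s y)"
    unfolding vector_scalar_mult_def by (intro continuous_on_vec_lambda continuous_intros)
  moreover have "(\<lambda>y. c *s y) ` C \<subseteq> closure C"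
    using assms \<open>c \<noteq> 0\<close> closure_subset unfolding scale_invariant_def by blast
  ultimately have "(\<lambda>y. c *s y) ` closure C \<subseteq> closure C"
    by (rule image_closure_subset[OF _ closed_closure])
  then show "c *s y \<in> closure C"
    using \<open>y \<in> closure C\<close> by blast
qed

lemma chart_image_scale_invariant:
  assumes "scale_invariant C"
  shows "chart k ` (C \<inter> {y. y $ k \<noteq> 0}) = {z. chart_inv k z \<in> C}"
proof (intro equalityI subsetI)
  fix z assume "z \<in> chart k ` (C \<inter> {y. y $ k \<noteq> 0})"
  then obtain y where y: "y \<in> C" "y $ k \<noteq> 0" and z: "z = chart k y"
    by blast
  have "chart_inv k z = inverse (y $ k) *s y"
    using scale_chart_inv_chart[OF y(2)] y(2) unfolding z
    by (metis left_inverse vector_smult_assoc vector_smult_lid)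
  then show "z \<in> {z. chart_inv k z \<in> C}"
    using assms y unfolding scale_invariant_def by simp
next
  fix z assume "z \<in> {z. chart_inv k z \<in> C}"
  then show "z \<in> chart k ` (C \<inter> {y. y $ k \<noteq> 0})"
    by (intro image_eqI[of _ _ "chart_inv k z"]) auto
qed

definition hom_cone :: "('a::field, 'n::finite) vec set \<Rightarrow> ('a, 'n option) vec set" where
  "hom_cone A = {c *s hom x | c x. c \<noteq> 0 \<and> x \<in> A}"

lemma scale_invariant_hom_cone: "scale_invariant (hom_cone (A :: ('a::field, 'n::finite) vec set))"
  unfolding scale_invariant_def
proof (intro allI impI)
  fix c :: 'a and y assume "c \<noteq> 0" "y \<in> hom_cone A"
  then obtain d x where "y = d *s hom x" "d \<noteq> 0" "x \<in> A"
    unfolding hom_cone_def by blast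
  then have "c *s y = (c * d) *s hom x" "c * d \<noteq> 0"
    using \<open>c \<noteq> 0\<close> by simp_all
  then show "c *s y \<in> hom_cone A"
    using \<open>x \<in> A\<close> unfolding hom_cone_def by blast
qed

lemma proj_closure_cone_eq: "proj_closure_cone A = closure (hom_cone A) - {0}"
  by (simp add: proj_closure_cone_def hom_cone_def)

lemma chart_image_proj_closure_cone:
  fixes A :: "('a::real_normed_field, 'n::finite) vec set"
  shows "chart k ` (proj_closure_cone A \<inter> {y. y $ k \<noteq> 0}) = {z. chart_inv k z \<in> closure (hom_cone A)}"
proof -
  have "proj_closure_cone A \<inter> {y. y $ k \<noteq> 0} = closure (hom_cone A) \<inter> {y. y $ k \<noteq> 0}"
    by (auto simp: proj_closure_cone_eq)
  then show ?thesis
    by (simp add: chart_image_scale_invariant scale_invariant_closure scale_invariant_hom_cone)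
qed

lemma compact_proj_closure_cone_sphere:
  fixes A :: "('a::{real_normed_field, heine_borel}, 'n::finite) vec set"
  shows "compact (proj_closure_cone A \<inter> sphere 0 1)"
proof -
  have "proj_closure_cone A \<inter> sphere 0 1 = closure (hom_cone A) \<inter> sphere 0 1"
    by (auto simp: proj_closure_cone_eq)
  then show ?thesis
    by (simp add: closed_Int_compact)
qed

section \<open>The projective closure of the solution set\<close>

definition hom_solset :: "('a::comm_ring_1, 5 option) vec set" where
  "hom_solset = {y. \<forall>i. y$None * y$None + y$None * y$Some i = y$Some (i + 2) * y$Some (i + 3)}"

lemma closed_hom_solset: "closed (hom_solset :: ('a::real_normed_field, 5 option) vec set)"
  unfolding hom_solset_def by (intro closed_Collect_all closed_Collect_eq continuous_intros)

lemma scale_invariant_hom_solset: "scale_invariant (hom_solset :: ('a::field, 5 option) vec set)"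
  unfolding scale_invariant_def
proof (intro allI impI)
  fix c :: 'a and y :: "('a, 5 option) vec"
  assume "y \<in> hom_solset"
  then have "c * c * (y$None * y$None + y$None * y$Some i) = c * c * (y$Some (i + 2) * y$Some (i + 3))" for i
    unfolding hom_solset_def by simp
  then show "c *s y \<in> hom_solset"
    unfolding hom_solset_def by (simp add: algebra_simps)
qed

lemma hom_mem_hom_solset_iff: "hom x \<in> hom_solset \<longleftrightarrow> x \<in> solset"
  by (simp add: hom_solset_def hom_def solset_iff_cyclic)

lemma closure_hom_cone_solset_subset: "closure (hom_cone solset) \<subseteq> (hom_solset :: ('a::real_normed_field, 5 option) vec set)"
proof (rule closure_minimal[OF _ closed_hom_solset])
  show "hom_cone solset \<subseteq> (hom_solset :: ('a, 5 option) vec set)"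
    using scale_invariant_hom_solset hom_mem_hom_solset_iff
    unfolding hom_cone_def scale_invariant_def by blast
qed

lemma hom_solset_subset_hom_cone:
  "hom_solset \<inter> {y. y $ None \<noteq> 0} \<subseteq> (hom_cone solset :: ('a::field, 5 option) vec set)"
proof
  fix y :: "('a, 5 option) vec" assume y: "y \<in> hom_solset \<inter> {y. y $ None \<noteq> 0}"
  then have "chart None y \<in> solset"
    using chart_image_scale_invariant[OF scale_invariant_hom_solset, of None]
    by (auto simp: hom_mem_hom_solset_iff)
  moreover have "y = y $ None *s hom (chart None y)"
    using scale_chart_inv_chart[of y None] y by simp
  ultimately show "y \<in> hom_cone solset"
    using y unfolding hom_cone_def by blast
qed

lemma chart_inv_mem_hom_solset_iff: "chart_inv (Some a) z \<in> hom_solset \<longleftrightarrow> z \<in> chart_surface a"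
proof -
  have "chart_inv (Some a) z \<in> hom_solset \<longleftrightarrow>
      z$a * z$a + z$a = z$(a + 2) * z$(a + 3) \<and> z$a * z$a + z$a * z$(a + 1) = z$(a + 3) * z$(a + 4) \<and>
      z$a * z$a + z$a * z$(a + 2) = z$(a + 4) \<and> z$a * z$a + z$a * z$(a + 3) = z$(a + 1) \<and>
      z$a * z$a + z$a * z$(a + 4) = z$(a + 1) * z$(a + 2)"
    unfolding hom_solset_def mem_Collect_eq forall_5_from[where a=a] by (simp add: add.assoc)
  also have "\<dots> \<longleftrightarrow> z \<in> chart_surface a"
    unfolding mem_chart_surface_iff by (auto, algebra+)
  finally show ?thesis .
qed

lemma continuous_at_in_closure:
  fixes f :: "'a::{perfect_space, t2_space} \<Rightarrow> 'b::topological_space"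
  assumes "continuous (at c) f" and "\<And>u. u \<noteq> c \<Longrightarrow> f u \<in> S"
  shows "f c \<in> closure S"
proof (rule Lim_in_closed_set[OF closed_closure _ trivial_limit_at])
  show "\<forall>\<^sub>F u in at c. f u \<in> closure S"
    using assms(2) closure_subset unfolding eventually_at_filter by (auto intro!: always_eventually)
  show "(f \<longlongrightarrow> f c) (at c)"
    using assms(1) continuous_at by blast
qed

text \<open>
  Each curve below lies on the chart surface, has z$a = u, and passes through the given point
  at u = 0.
\<close>

lemma chart_surface_axis_2_in_closure:
  assumes "p \<noteq> 0"
  shows "cyclic_vec a 0 0 p 0 0 \<in> closure {z \<in> chart_surface a. z$a \<noteq> (0::'a::real_normed_field)}"
proof -
  define \<gamma> where "\<gamma> u = cyclic_vec a u (u * u + u * (u / p)) (p * (1 + u)) (u / p)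
    (u * u + u * (p * (1 + u)))" for u
  have "continuous (at 0) \<gamma>"
    unfolding \<gamma>_def[abs_def] using assms by (intro continuous_intros) auto
  moreover have "\<gamma> u \<in> {z \<in> chart_surface a. z$a \<noteq> 0}" if "u \<noteq> 0" for u
  proof -
    have "p * (1 + u) * (u / p) = u * u + u"
      using assms by (simp add: field_simps)
    then show ?thesis
      using that by (simp add: \<gamma>_def mem_chart_surface_iff)
  qed
  ultimately have "\<gamma> 0 \<in> closure {z \<in> chart_surface a. z$a \<noteq> 0}"
    by (rule continuous_at_in_closure)
  then show ?thesis
    by (simp add: \<gamma>_def)
qed

lemma chart_surface_axis_3_in_closure:
  assumes "q \<noteq> 0"
  shows "cyclic_vec a 0 0 0 q 0 \<in> closure {z \<in> chart_surface a. z$a \<noteq> (0::'a::real_normed_field)}"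
proof -
  define \<gamma> where "\<gamma> u = cyclic_vec a u (u * u + u * (q * (1 + u))) (u / q) (q * (1 + u))
    (u * u + u * (u / q))" for u
  have "continuous (at 0) \<gamma>"
    unfolding \<gamma>_def[abs_def] using assms by (intro continuous_intros) auto
  moreover have "\<gamma> u \<in> {z \<in> chart_surface a. z$a \<noteq> 0}" if "u \<noteq> 0" for u
  proof -
    have "u / q * (q * (1 + u)) = u * u + u"
      using assms by (simp add: field_simps)
    then show ?thesis
      using that by (simp add: \<gamma>_def mem_chart_surface_iff)
  qed
  ultimately have "\<gamma> 0 \<in> closure {z \<in> chart_surface a. z$a \<noteq> 0}"
    by (rule continuous_at_in_closure)
  then show ?thesis
    by (simp add: \<gamma>_def)
qed

lemma chart_surface_origin_in_closure:
  "cyclic_vec a 0 0 0 0 0 \<in> closure {z \<in> chart_surface a. z$a \<noteq> (0::'a::real_normed_field)}"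
proof -
  define \<gamma> where "\<gamma> u = cyclic_vec a 0 0 u 0 0" for u :: 'a
  have "continuous (at 0) \<gamma>"
    unfolding \<gamma>_def[abs_def] by (intro continuous_intros)
  moreover have "\<gamma> u \<in> closure {z \<in> chart_surface a. z$a \<noteq> 0}" if "u \<noteq> 0" for u
    using chart_surface_axis_2_in_closure that by (simp add: \<gamma>_def)
  ultimately have "\<gamma> 0 \<in> closure (closure {z \<in> chart_surface a. z$a \<noteq> 0})"
    by (rule continuous_at_in_closure)
  then show ?thesis
    by (simp add: \<gamma>_def)
qed

lemma chart_surface_subset_closure:
  "chart_surface a \<subseteq> closure {z \<in> chart_surface a. z$a \<noteq> (0::'a::real_normed_field)}"
proof
  fix z :: "('a, 5) vec" assume z: "z \<in> chart_surface a"
  show "z \<in> closure {z \<in> chart_surface a. z$a \<noteq> 0}"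
  proof (cases "z$a = 0")
    case False
    then have "z \<in> {z \<in> chart_surface a. z$a \<noteq> 0}"
      using z by simp
    then show ?thesis
      by (rule closure_subset[THEN subsetD])
  next
    case True
    then have zeros: "z$a = 0" "z$(a + 1) = 0" "z$(a + 4) = 0" and "z$(a + 2) * z$(a + 3) = 0"
      using z by (simp_all add: mem_chart_surface_iff)
    then consider "z$(a + 2) \<noteq> 0" "z$(a + 3) = 0" | "z$(a + 2) = 0" "z$(a + 3) \<noteq> 0"
      | "z$(a + 2) = 0" "z$(a + 3) = 0"
      by auto
    then show ?thesis
    proof cases
      case 1
      then have "cyclic_vec a 0 0 (z$(a + 2)) 0 0 = z"
        using zeros by (simp add: cyclic_vec_eq_iff)
      then show ?thesis
        using chart_surface_axis_2_in_closure[OF 1(1), where a=a] by simp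
    next
      case 2
      then have "cyclic_vec a 0 0 0 (z$(a + 3)) 0 = z"
        using zeros by (simp add: cyclic_vec_eq_iff)
      then show ?thesis
        using chart_surface_axis_3_in_closure[OF 2(2), where a=a] by simp
    next
      case 3
      then have "cyclic_vec a 0 0 0 0 0 = z"
        using zeros by (simp add: cyclic_vec_eq_iff)
      then show ?thesis
        using chart_surface_origin_in_closure[where a=a and 'a='a] by simp
    qed
  qed
qed

lemma chart_None_proj_closure_solset:
  "chart None ` (proj_closure_cone solset \<inter> {y. y $ None \<noteq> 0}) = (solset :: ('a::real_normed_field, 5) vec set)"
  unfolding chart_image_proj_closure_cone
proof (intro equalityI subsetI)
  fix x :: "('a, 5) vec" assume "x \<in> {x. chart_inv None x \<in> closure (hom_cone solset)}"
  then have "hom x \<in> hom_solset"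
    using closure_hom_cone_solset_subset by auto
  then show "x \<in> solset"
    by (simp add: hom_mem_hom_solset_iff)
next
  fix x :: "('a, 5) vec" assume "x \<in> solset"
  then have "hom x \<in> hom_cone solset"
    unfolding hom_cone_def by (intro CollectI exI[of _ "1::'a"] exI[of _ x]) simp
  then show "x \<in> {x. chart_inv None x \<in> closure (hom_cone solset)}"
    using closure_subset by auto
qed

lemma chart_Some_proj_closure_solset:
  "chart (Some a) ` (proj_closure_cone solset \<inter> {y. y $ Some a \<noteq> 0})
    = (chart_surface a :: ('a::real_normed_field, 5) vec set)"
  unfolding chart_image_proj_closure_cone
proof (intro equalityI subsetI)
  fix z :: "('a, 5) vec" assume "z \<in> {z. chart_inv (Some a) z \<in> closure (hom_cone solset)}"
  then have "chart_inv (Some a) z \<in> hom_solset"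
    using closure_hom_cone_solset_subset by auto
  then show "z \<in> chart_surface a"
    by (simp add: chart_inv_mem_hom_solset_iff)
next
  let ?S = "{z \<in> chart_surface a. z$a \<noteq> (0::'a)}"
  have "chart_inv (Some a) ` ?S \<subseteq> hom_solset \<inter> {y. y $ None \<noteq> 0}"
    by (auto simp: chart_inv_mem_hom_solset_iff)
  also have "\<dots> \<subseteq> closure (hom_cone solset)"
    using hom_solset_subset_hom_cone closure_subset by (rule order_trans)
  finally have "chart_inv (Some a) ` closure ?S \<subseteq> closure (hom_cone solset)"
    by (rule image_closure_subset[OF continuous_on_chart_inv closed_closure])
  moreover fix z :: "('a, 5) vec" assume "z \<in> chart_surface a"
  then have "z \<in> closure ?S"
    by (rule chart_surface_subset_closure[THEN subsetD])
  ultimately show "z \<in> {z. chart_inv (Some a) z \<in> closure (hom_cone solset)}"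
    by (simp add: image_subset_iff)
qed

theorem theorem2p1:
  shows "real_submanifold TYPE(3) (solset :: (real, 5) vec set)
    \<and> (\<forall>k. real_submanifold TYPE(3)
            (chart k ` (proj_closure_cone (solset :: (real, 5) vec set) \<inter> {y. y $ k \<noteq> 0})))
    \<and> compact (proj_closure_cone (solset :: (real, 5) vec set) \<inter> sphere 0 1)
    \<and> (\<forall>k. complex_submanifold TYPE(3)
            (chart k ` (proj_closure_cone (solset :: (complex, 5) vec set) \<inter> {y. y $ k \<noteq> 0})))
    \<and> compact (proj_closure_cone (solset :: (complex, 5) vec set) \<inter> sphere 0 1)"
proof (intro conjI allI)
  fix k :: "5 option"
  show "real_submanifold TYPE(3) (chart k ` (proj_closure_cone solset \<inter> {y. y $ k \<noteq> 0}))"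
    by (cases k) (simp_all add: chart_None_proj_closure_solset chart_Some_proj_closure_solset
        real_submanifold_solset real_submanifold_chart_surface)
  show "complex_submanifold TYPE(3) (chart k ` (proj_closure_cone solset \<inter> {y. y $ k \<noteq> 0}))"
    by (cases k) (simp_all add: chart_None_proj_closure_solset chart_Some_proj_closure_solset
        complex_submanifold_solset complex_submanifold_chart_surface)
qed (simp_all add: real_submanifold_solset compact_proj_closure_cone_sphere)

end
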